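(* Let $C_s$ be a generalized sequential choice rule with categories $1,\dots,K$ as described in the context, and let $X^M=(x^1,\dots,x^M)$ be an observable offer process for $s$. For every $m\in\{1,\dots,M\}$ and every category $k\in\{1,\dots,K\}$ (with $X^0=\emptyset$): 1. $C_k(H_k(X^{m-1});q_k^{m-1})\subseteq H_k(X^m)$; 2. $C_k(F_k(X^m);q_k^m)\subseteq C_k(H_k(X^{m-1});q_k^{m-1})\cup[H_k(X^m)\setminus H_k(X^{m-1})]$; 3. $C_k(H_k(X^m);q_k^m)=C_k(F_k(X^m);q_k^m)$; 4. $q_k^{m-1}\ge q_k^m$; 5. $R_k(F_k(X^{m-1});q_k^{m-1})\subseteq R_k(F_k(X^m);q_k^m)$.
   Context: Contracts: a finite set $X$; each $x\in X$ has an individual $\mathbf{i}(x)$ and an institution $\mathbf{s}(x)$; $X_s=\{x:\mathbf{s}(x)=s\}$, $\mathbf{i}(Y)=\{\mathbf{i}(x):x\in Y\}$, and $Y_i$ is the set of contracts of $i$ in $Y$. Generalized sequential choice rule $C_s$: there are ordered categories $1,\dots,K$. Each category $k$ has a choice rule $C_k(\cdot\,;q):2^{X_s}\to 2^{X_s}$ for every capacity $q\in\mathbb{Z}_+$, with $C_k(Y;q)\subseteq Y$, choosing at most one contract per individual, such that for each fixed $q$: (substitutes) for all $x,y$ and $Z$, $y\notin C_k(Z\cup\{y\};q)$ implies $y\notin C_k(Z\cup\{x,y\};q)$; (size monotonicity) $|C_k(Z;q)|\le|C_k(Z\cup\{x\};q)|$; and (quota monotonicity) $C_k(Y;q)\subseteq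 C_k(Y;q+1)$ and $|C_k(Y;q+1)|-|C_k(Y;q)|\le1$ for all $Y$. Given $Y\subseteq X_s$, the rule is computed sequentially: $H_1(Y)=Y$ and $q_1$ is an exogenous capacity; for $k\ge1$, $r_k=q_k-|C_k(H_k(Y);q_k)|$ is the unused capacity of category $k$; $q_k=q_k(r_1,\dots,r_{k-1})$ for $k\ge2$, where each transfer function $q_k(\cdot)$ is weakly increasing in each argument (monotone transfer policy); $H_k(Y)=\{y\in Y:\mathbf{i}(y)\notin\mathbf{i}(\bigcup_{k'<k}C_{k'}(H_{k'}(Y);q_{k'}))\}$ is the set of contracts available to category $k$. Then $C_s(Y)=\bigcup_{k}C_k(H_k(Y);q_k)$. Write $R_k(Y;q)=Y\setminus C_k(Y;q)$. Offer process: a finite sequence of distinct contracts $(x^1,\dots,x^M)$ in $X_s$; it is observable if for every $m$, $\mathbf{i}(x^m)\notin\mathbf{i}(C_s(\{x^1,\dots,x^{m-1}\}))$. Write $X^m=\{x^1,\dots,x^m\}$ and $X^0=\emptyset$. $H_k(X^m)$ denotes the set of contracts available to category $k$ in the computation of $C_s(X^m)$, $q_k^m$ the capacity of category $k$ in that computation (so $q_k^m=q_k(\tilde r_1,\dots,\tilde r_{k-1})$ with the unused capacities $\tilde r$ of that computation, and $q_1^m=q_1$), and $F_k(X^m)=\bigcup_{n\le m}H_k(X^n)$. *)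

theory Defs
  imports Main
begin

text \<open>Contracts have type 'x, individuals 'i, institutions 's.
  A category choice rule family is  C :: nat \<Rightarrow> 'x set \<Rightarrow> nat \<Rightarrow> 'x set,
  where  C k Y q  is C_k(Y;q).  Transfer functions are  qf :: nat \<Rightarrow> (nat \<Rightarrow> int) \<Rightarrow> nat,
  where  qf k r = q_k(r 1, ..., r (k-1))  (only the values r j, 1 \<le> j < k, matter;
  this follows from the monotonicity assumption below).  Unused capacities are
  integers  r_k = q_k - |C_k(H_k;q_k)|.\<close>

definition contracts_of :: "'x set \<Rightarrow> ('x \<Rightarrow> 's) \<Rightarrow> 's \<Rightarrow> 'x set" where
  "contracts_of X inst s = {x \<in> X. inst x = s}"

text \<open>State after processing categories 1..k: (union of chosen sets, unused capacities).\<close>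
fun seq_state :: "(nat \<Rightarrow> 'x set \<Rightarrow> nat \<Rightarrow> 'x set) \<Rightarrow> (nat \<Rightarrow> (nat \<Rightarrow> int) \<Rightarrow> nat)
    \<Rightarrow> ('x \<Rightarrow> 'i) \<Rightarrow> 'x set \<Rightarrow> nat \<Rightarrow> 'x set \<times> (nat \<Rightarrow> int)" where
  "seq_state C qf ind Y 0 = ({}, (\<lambda>_. 0))"
| "seq_state C qf ind Y (Suc k) =
     (let (U, r) = seq_state C qf ind Y k;
          H = {y \<in> Y. ind y \<notin> ind ` U};
          q = qf (Suc k) r;
          c = C (Suc k) H q
      in (U \<union> c, r(Suc k := int q - int (card c))))"

text \<open>H_k(Y): contracts available to category k (k \<ge> 1).\<close>
definition avail :: "(nat \<Rightarrow> 'x set \<Rightarrow> nat \<Rightarrow> 'x set) \<Rightarrow> (nat \<Rightarrow> (nat \<Rightarrow> int) \<Rightarrow> nat)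
    \<Rightarrow> ('x \<Rightarrow> 'i) \<Rightarrow> 'x set \<Rightarrow> nat \<Rightarrow> 'x set" where
  "avail C qf ind Y k = {y \<in> Y. ind y \<notin> ind ` fst (seq_state C qf ind Y (k - 1))}"

text \<open>q_k in the computation of C_s(Y) (k \<ge> 1).\<close>
definition cap :: "(nat \<Rightarrow> 'x set \<Rightarrow> nat \<Rightarrow> 'x set) \<Rightarrow> (nat \<Rightarrow> (nat \<Rightarrow> int) \<Rightarrow> nat)
    \<Rightarrow> ('x \<Rightarrow> 'i) \<Rightarrow> 'x set \<Rightarrow> nat \<Rightarrow> nat" where
  "cap C qf ind Y k = qf k (snd (seq_state C qf ind Y (k - 1)))"

definition seq_choice :: "(nat \<Rightarrow> 'x set \<Rightarrow> nat \<Rightarrow> 'x set) \<Rightarrow> (nat \<Rightarrow> (nat \<Rightarrow> int) \<Rightarrow> nat)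
    \<Rightarrow> ('x \<Rightarrow> 'i) \<Rightarrow> nat \<Rightarrow> 'x set \<Rightarrow> 'x set" where
  "seq_choice C qf ind K Y = fst (seq_state C qf ind Y K)"

definition rejected :: "(nat \<Rightarrow> 'x set \<Rightarrow> nat \<Rightarrow> 'x set) \<Rightarrow> nat \<Rightarrow> 'x set \<Rightarrow> nat \<Rightarrow> 'x set" where
  "rejected C k Y q = Y - C k Y q"

definition category_rule :: "'x set \<Rightarrow> ('x \<Rightarrow> 'i) \<Rightarrow> ('x set \<Rightarrow> nat \<Rightarrow> 'x set) \<Rightarrow> bool" where
  "category_rule Xs ind Ck \<longleftrightarrow>
     (\<forall>Y q. Y \<subseteq> Xs \<longrightarrow> Ck Y q \<subseteq> Y \<and> inj_on ind (Ck Y q)) \<and>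
     (\<forall>q x y Z. Z \<subseteq> Xs \<longrightarrow> x \<in> Xs \<longrightarrow> y \<in> Xs \<longrightarrow>
         y \<notin> Ck (Z \<union> {y}) q \<longrightarrow> y \<notin> Ck (Z \<union> {x, y}) q) \<and>
     (\<forall>q x Z. Z \<subseteq> Xs \<longrightarrow> x \<in> Xs \<longrightarrow> card (Ck Z q) \<le> card (Ck (Z \<union> {x}) q)) \<and>
     (\<forall>q Y. Y \<subseteq> Xs \<longrightarrow> Ck Y q \<subseteq> Ck Y (q + 1) \<and>
         int (card (Ck Y (q + 1))) - int (card (Ck Y q)) \<le> 1)"

text \<open>Monotone transfer policy: q_k depends only on r_1..r_{k-1}, weakly increasingly.
  For k = 1 this forces q_1 to be a constant (the exogenous capacity).\<close>
definition monotone_transfer :: "(nat \<Rightarrow> (nat \<Rightarrow> int) \<Rightarrow> nat) \<Rightarrow> nat \<Rightarrow> bool" where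
  "monotone_transfer qf K \<longleftrightarrow>
     (\<forall>k \<in> {1..K}. \<forall>r r'. (\<forall>j \<in> {1..<k}. r j \<le> r' j) \<longrightarrow> qf k r \<le> qf k r')"

definition gen_seq_rule :: "'x set \<Rightarrow> ('x \<Rightarrow> 'i) \<Rightarrow> ('x \<Rightarrow> 's) \<Rightarrow> 's \<Rightarrow> nat
    \<Rightarrow> (nat \<Rightarrow> 'x set \<Rightarrow> nat \<Rightarrow> 'x set) \<Rightarrow> (nat \<Rightarrow> (nat \<Rightarrow> int) \<Rightarrow> nat) \<Rightarrow> bool" where
  "gen_seq_rule X ind inst s K C qf \<longleftrightarrow>
     finite X \<and>
     (\<forall>k \<in> {1..K}. category_rule (contracts_of X inst s) ind (C k)) \<and>
     monotone_transfer qf K"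

text \<open>Observable offer process xs = [x^1, ..., x^M]; X^m = set (take m xs).\<close>
definition observable :: "'x set \<Rightarrow> ('x \<Rightarrow> 'i) \<Rightarrow> ('x \<Rightarrow> 's) \<Rightarrow> 's \<Rightarrow> nat
    \<Rightarrow> (nat \<Rightarrow> 'x set \<Rightarrow> nat \<Rightarrow> 'x set) \<Rightarrow> (nat \<Rightarrow> (nat \<Rightarrow> int) \<Rightarrow> nat) \<Rightarrow> 'x list \<Rightarrow> bool" where
  "observable X ind inst s K C qf xs \<longleftrightarrow>
     distinct xs \<and> set xs \<subseteq> contracts_of X inst s \<and>
     (\<forall>m < length xs. ind (xs ! m) \<notin> ind ` seq_choice C qf ind K (set (take m xs)))"

definition F_avail :: "(nat \<Rightarrow> 'x set \<Rightarrow> nat \<Rightarrow> 'x set) \<Rightarrow> (nat \<Rightarrow> (nat \<Rightarrow> int) \<Rightarrow> nat)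
    \<Rightarrow> ('x \<Rightarrow> 'i) \<Rightarrow> 'x list \<Rightarrow> nat \<Rightarrow> nat \<Rightarrow> 'x set" where
  "F_avail C qf ind xs k m = (\<Union>n \<in> {0..m}. avail C qf ind (set (take n xs)) k)"

end

theory Submission
  imports Defs
begin

text \<open>
  The claims are proved for stage m = n + 1 by induction on the category k, assuming claim 3
  at stage n for every category; claim 3 at every stage then follows by induction on n.
  For a fixed k, all earlier categories already satisfy the claims. Since the pool F only
  grows and the capacity of an earlier category only shrinks, the unused capacity of every
  earlier category shrinks as well, so the monotone transfer policy gives claim 4. Claim 5
  follows from substitutability and quota monotonicity, and claim 2 from claim 5. Claim 1
  holds because an individual served by an earlier category at stage n + 1 but not at stage
  n is either the newly offered one, who differs from every individual chosen at stage n by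
  observability, or one that was already blocked for category k at stage n. Claim 3 follows
  from claims 1 and 2 by the irrelevance of rejected contracts, as H is contained in F.
\<close>

lemma category_rule_subset:
  "category_rule Xs ind Ck \<Longrightarrow> Y \<subseteq> Xs \<Longrightarrow> Ck Y q \<subseteq> Y"
  unfolding category_rule_def by simp

lemma category_rule_substitutes_insert:
  "\<lbrakk>category_rule Xs ind Ck; Z \<subseteq> Xs; x \<in> Xs; y \<in> Xs; y \<notin> Ck (Z \<union> {y}) q\<rbrakk>
    \<Longrightarrow> y \<notin> Ck (Z \<union> {x, y}) q"
  unfolding category_rule_def by (simp del: insert_is_Un Un_insert_right)

lemma category_rule_card_insert:
  "\<lbrakk>category_rule Xs ind Ck; Z \<subseteq> Xs; x \<in> Xs\<rbrakk> \<Longrightarrow> card (Ck Z q) \<le> card (Ck (Z \<union> {x}) q)"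
  unfolding category_rule_def by (simp del: insert_is_Un Un_insert_right)

lemma category_rule_quota_Suc:
  "category_rule Xs ind Ck \<Longrightarrow> Y \<subseteq> Xs \<Longrightarrow> Ck Y q \<subseteq> Ck Y (Suc q)"
  unfolding category_rule_def by simp

lemma category_rule_card_quota_Suc:
  assumes "category_rule Xs ind Ck" "Y \<subseteq> Xs"
  shows "card (Ck Y (Suc q)) \<le> Suc (card (Ck Y q))"
proof -
  have "int (card (Ck Y (q + 1))) - int (card (Ck Y q)) \<le> 1"
    using assms unfolding category_rule_def by simp
  then show ?thesis by simp
qed

lemma category_rule_substitutes:
  assumes rule: "category_rule Xs ind Ck" and "finite Xs"
    and "A \<subseteq> B" "B \<subseteq> Xs" "y \<in> A" "y \<notin> Ck A q"
  shows "y \<notin> Ck B q"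
proof -
  have "finite (B - A)" "B - A \<subseteq> Xs"
    using assms by (auto intro: rev_finite_subset)
  then have "y \<notin> Ck (A \<union> (B - A)) q"
  proof (induction rule: finite_subset_induct')
    case empty
    then show ?case using assms by simp
  next
    case (insert x D)
    let ?Z = "A \<union> D - {y}"
    have "y \<notin> Ck (?Z \<union> {y}) q"
      using insert.IH \<open>y \<in> A\<close> by (simp add: insert_absorb)
    moreover have "?Z \<subseteq> Xs" "y \<in> Xs"
      using insert.hyps assms by auto
    ultimately have "y \<notin> Ck (?Z \<union> {x, y}) q"
      using category_rule_substitutes_insert[OF rule] \<open>x \<in> Xs\<close> by blast
    moreover have "?Z \<union> {x, y} = A \<union> insert x D"
      using \<open>y \<in> A\<close> by auto
    ultimately show ?case by simp
  qed
  then show ?thesis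
    using \<open>A \<subseteq> B\<close> by (simp add: Un_absorb1 Un_Diff_cancel)
qed

lemma category_rule_card_mono:
  assumes rule: "category_rule Xs ind Ck" and "finite Xs" and "A \<subseteq> B" "B \<subseteq> Xs"
  shows "card (Ck A q) \<le> card (Ck B q)"
proof -
  have "finite (B - A)" "B - A \<subseteq> Xs"
    using assms by (auto intro: rev_finite_subset)
  then have "card (Ck A q) \<le> card (Ck (A \<union> (B - A)) q)"
  proof (induction rule: finite_subset_induct')
    case (insert x D)
    have "card (Ck (A \<union> D) q) \<le> card (Ck (A \<union> D \<union> {x}) q)"
      using category_rule_card_insert[OF rule, of "A \<union> D" x q] insert.hyps assms by blast
    with insert.IH show ?case by simp
  qed simp
  then show ?thesis
    using \<open>A \<subseteq> B\<close> by (simp add: Un_absorb1 Un_Diff_cancel)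
qed

lemma category_rule_irrelevance_of_rejected:
  assumes rule: "category_rule Xs ind Ck" and "finite Xs"
    and "A \<subseteq> B" "B \<subseteq> Xs" "Ck B q \<subseteq> A"
  shows "Ck A q = Ck B q"
proof -
  have "Ck B q \<subseteq> Ck A q"
    using category_rule_substitutes[OF rule \<open>finite Xs\<close> \<open>A \<subseteq> B\<close> \<open>B \<subseteq> Xs\<close>] assms(5) by blast
  moreover have "finite (Ck A q)"
    using assms category_rule_subset[OF rule] by (meson finite_subset order_trans)
  ultimately show ?thesis
    using category_rule_card_mono[OF assms(1-4)] card_seteq[of "Ck A q" "Ck B q"] by auto
qed

lemma category_rule_quota_mono:
  assumes rule: "category_rule Xs ind Ck" and "Y \<subseteq> Xs" "q \<le> q'"
  shows "Ck Y q \<subseteq> Ck Y q'"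
  using \<open>q \<le> q'\<close>
proof (induction rule: dec_induct)
  case (step p)
  then show ?case using category_rule_quota_Suc[OF rule \<open>Y \<subseteq> Xs\<close>, of p] by blast
qed simp

lemma category_rule_unused_quota_mono:
  assumes rule: "category_rule Xs ind Ck" and "Y \<subseteq> Xs" "q \<le> q'"
  shows "int q - int (card (Ck Y q)) \<le> int q' - int (card (Ck Y q'))"
  using \<open>q \<le> q'\<close>
proof (induction rule: dec_induct)
  case (step p)
  then show ?case using category_rule_card_quota_Suc[OF rule \<open>Y \<subseteq> Xs\<close>, of p] by simp
qed simp

lemma category_rule_rejected_antimono:
  assumes rule: "category_rule Xs ind (C k)" and "finite Xs"
    and "A \<subseteq> B" "B \<subseteq> Xs" "q' \<le> q"
  shows "rejected C k A q \<subseteq> rejected C k B q'"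
proof
  fix y assume "y \<in> rejected C k A q"
  then have "y \<in> A" "y \<notin> C k A q"
    by (auto simp: rejected_def)
  then have "y \<notin> C k B q"
    using category_rule_substitutes[OF rule] assms by blast
  then have "y \<notin> C k B q'"
    using category_rule_quota_mono[OF rule \<open>B \<subseteq> Xs\<close> \<open>q' \<le> q\<close>] by blast
  then show "y \<in> rejected C k B q'"
    using \<open>y \<in> A\<close> \<open>A \<subseteq> B\<close> by (auto simp: rejected_def)
qed

lemma category_rule_unused_antimono:
  assumes rule: "category_rule Xs ind Ck" and "finite Xs"
    and "A \<subseteq> B" "B \<subseteq> Xs" "q' \<le> q"
  shows "int q' - int (card (Ck B q')) \<le> int q - int (card (Ck A q))"
  using category_rule_unused_quota_mono[OF rule \<open>B \<subseteq> Xs\<close> \<open>q' \<le> q\<close>]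
    category_rule_card_mono[OF assms(1-4), of q] by linarith

lemma seq_state_fst_eq_UN:
  "fst (seq_state C qf ind Y j) = (\<Union>i \<in> {1..j}. C i (avail C qf ind Y i) (cap C qf ind Y i))"
proof (induction j)
  case (Suc j)
  have "fst (seq_state C qf ind Y (Suc j)) =
      fst (seq_state C qf ind Y j) \<union> C (Suc j) (avail C qf ind Y (Suc j)) (cap C qf ind Y (Suc j))"
    by (simp add: avail_def cap_def Let_def split_def)
  then show ?case
    using Suc.IH by (auto simp: atLeastAtMostSuc_conv)
qed simp

lemma seq_state_fst_mono:
  "j \<le> j' \<Longrightarrow> fst (seq_state C qf ind Y j) \<subseteq> fst (seq_state C qf ind Y j')"
  unfolding seq_state_fst_eq_UN by (rule UN_mono) auto

lemma seq_state_snd: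
  "snd (seq_state C qf ind Y j) i =
    (if 1 \<le> i \<and> i \<le> j
     then int (cap C qf ind Y i) - int (card (C i (avail C qf ind Y i) (cap C qf ind Y i)))
     else 0)"
  by (induction j) (auto simp: avail_def cap_def Let_def split_def)

locale offer_process =
  fixes X :: "'x set" and ind :: "'x \<Rightarrow> 'i" and inst :: "'x \<Rightarrow> 's" and s :: 's and K :: nat
    and C :: "nat \<Rightarrow> 'x set \<Rightarrow> nat \<Rightarrow> 'x set" and qf :: "nat \<Rightarrow> (nat \<Rightarrow> int) \<Rightarrow> nat"
    and xs :: "'x list"
  assumes gen_seq_rule: "gen_seq_rule X ind inst s K C qf"
    and observable: "observable X ind inst s K C qf xs"
begin

abbreviation "Xs \<equiv> contracts_of X inst s"
abbreviation "served n j \<equiv> fst (seq_state C qf ind (set (take n xs)) j)"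
abbreviation "H k n \<equiv> avail C qf ind (set (take n xs)) k"
abbreviation "Q k n \<equiv> cap C qf ind (set (take n xs)) k"
abbreviation "F k n \<equiv> F_avail C qf ind xs k n"
abbreviation "chosen k n \<equiv> C k (H k n) (Q k n)"

lemma finite_Xs: "finite Xs"
  using gen_seq_rule unfolding gen_seq_rule_def contracts_of_def by auto

lemma category_rule_C: "1 \<le> k \<Longrightarrow> k \<le> K \<Longrightarrow> category_rule Xs ind (C k)"
  using gen_seq_rule unfolding gen_seq_rule_def by auto

lemma monotone_transfer_qf: "monotone_transfer qf K"
  using gen_seq_rule unfolding gen_seq_rule_def by auto

lemma prefix_subset_Xs: "set (take n xs) \<subseteq> Xs"
  using observable set_take_subset unfolding observable_def by fast

lemma prefix_Suc: "n < length xs \<Longrightarrow> set (take (Suc n) xs) = insert (xs ! n) (set (take n xs))"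
  by (simp add: take_Suc_conv_app_nth)

lemma new_offer_not_served:
  "n < length xs \<Longrightarrow> ind (xs ! n) \<notin> ind ` served n K"
  using observable unfolding observable_def seq_choice_def by auto

lemma H_subset_prefix: "H k n \<subseteq> set (take n xs)"
  by (auto simp: avail_def)

lemma H_subset_Xs: "H k n \<subseteq> Xs"
  using H_subset_prefix prefix_subset_Xs by blast

lemma H_subset_F: "H k n \<subseteq> F k n"
  by (auto simp: F_avail_def)

lemma F_subset_Xs: "F k n \<subseteq> Xs"
  using H_subset_Xs by (auto simp: F_avail_def)

lemma F_0: "F k 0 = H k 0"
  by (simp add: F_avail_def)

lemma F_Suc: "F k (Suc n) = F k n \<union> H k (Suc n)"
  by (auto simp: F_avail_def atLeast0_atMost_Suc)

lemma F_mono_Suc: "F k n \<subseteq> F k (Suc n)"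
  by (simp add: F_Suc)

lemma cap_Suc_le:
  assumes "1 \<le> k" "k \<le> K"
    and chosen_eq: "\<And>j. 1 \<le> j \<Longrightarrow> j < k \<Longrightarrow> chosen j n = C j (F j n) (Q j n)"
    and chosen_eq_Suc: "\<And>j. 1 \<le> j \<Longrightarrow> j < k \<Longrightarrow> chosen j (Suc n) = C j (F j (Suc n)) (Q j (Suc n))"
    and cap_le: "\<And>j. 1 \<le> j \<Longrightarrow> j < k \<Longrightarrow> Q j (Suc n) \<le> Q j n"
  shows "Q k (Suc n) \<le> Q k n"
proof -
  have "snd (seq_state C qf ind (set (take (Suc n) xs)) (k - 1)) j
      \<le> snd (seq_state C qf ind (set (take n xs)) (k - 1)) j" if "j \<in> {1..<k}" for j
  proof -
    from that have j: "1 \<le> j" "j < k" by auto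
    have "int (Q j (Suc n)) - int (card (C j (F j (Suc n)) (Q j (Suc n))))
        \<le> int (Q j n) - int (card (C j (F j n) (Q j n)))"
      using category_rule_unused_antimono[OF category_rule_C finite_Xs F_mono_Suc F_subset_Xs cap_le]
        j \<open>k \<le> K\<close> by simp
    with j show ?thesis
      by (simp add: seq_state_snd chosen_eq chosen_eq_Suc)
  qed
  then show ?thesis
    using monotone_transfer_qf assms(1,2) unfolding monotone_transfer_def cap_def by simp
qed

lemma choice_F_Suc_subset:
  assumes "1 \<le> k" "k \<le> K"
    and chosen_eq: "chosen k n = C k (F k n) (Q k n)"
    and cap_le: "Q k (Suc n) \<le> Q k n"
  shows "C k (F k (Suc n)) (Q k (Suc n)) \<subseteq> chosen k n \<union> (H k (Suc n) - H k n)"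
proof
  fix z assume z: "z \<in> C k (F k (Suc n)) (Q k (Suc n))"
  note rule = category_rule_C[OF assms(1,2)]
  show "z \<in> chosen k n \<union> (H k (Suc n) - H k n)"
  proof (cases "z \<in> F k n")
    case True
    then have "z \<notin> rejected C k (F k n) (Q k n)"
      using category_rule_rejected_antimono[where C = C and k = k, OF rule finite_Xs F_mono_Suc
          F_subset_Xs cap_le] z
      by (auto simp: rejected_def)
    with True show ?thesis
      by (simp add: rejected_def chosen_eq)
  next
    case False
    moreover have "z \<in> F k (Suc n)"
      using z category_rule_subset[OF rule F_subset_Xs] by blast
    ultimately show ?thesis
      using H_subset_F F_Suc by blast
  qed
qed

lemma served_Suc_subset:
  assumes "n < length xs"
    and chosen_Suc: "\<And>j. 1 \<le> j \<Longrightarrow> j < k \<Longrightarrow> chosen j (Suc n) \<subseteq> chosen j n \<union> (H j (Suc n) - H j n)"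
  shows "ind ` served (Suc n) (k - 1) \<subseteq> insert (ind (xs ! n)) (ind ` served n (k - 1))"
proof
  fix i assume "i \<in> ind ` served (Suc n) (k - 1)"
  then obtain j z where j: "1 \<le> j" "j < k" and z: "z \<in> chosen j (Suc n)" and i: "i = ind z"
    by (auto simp: seq_state_fst_eq_UN)
  from chosen_Suc[OF j] z consider "z \<in> chosen j n" | "z \<in> H j (Suc n)" "z \<notin> H j n"
    by blast
  then show "i \<in> insert (ind (xs ! n)) (ind ` served n (k - 1))"
  proof cases
    case 1
    then have "z \<in> served n (k - 1)"
      using j by (auto simp: seq_state_fst_eq_UN)
    then show ?thesis using i by blast
  next
    case 2
    show ?thesis
    proof (cases "z = xs ! n")
      case False
      with 2 have "ind z \<in> ind ` served n (j - 1)"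
        using H_subset_prefix prefix_Suc[OF \<open>n < length xs\<close>] by (auto simp: avail_def)
      moreover have "served n (j - 1) \<subseteq> served n (k - 1)"
        using j by (simp add: seq_state_fst_mono)
      ultimately show ?thesis using i by blast
    qed (use i in simp)
  qed
qed

lemma chosen_subset_H_Suc:
  assumes "n < length xs" "1 \<le> k" "k \<le> K"
    and "\<And>j. 1 \<le> j \<Longrightarrow> j < k \<Longrightarrow> chosen j (Suc n) \<subseteq> chosen j n \<union> (H j (Suc n) - H j n)"
  shows "chosen k n \<subseteq> H k (Suc n)"
proof
  fix y assume y: "y \<in> chosen k n"
  then have "y \<in> H k n"
    using category_rule_subset[OF category_rule_C[OF assms(2,3)] H_subset_Xs] by blast
  then have "y \<in> set (take n xs)" and "ind y \<notin> ind ` served n (k - 1)"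
    by (auto simp: avail_def)
  moreover have "y \<in> served n K"
    using y assms(2,3) by (auto simp: seq_state_fst_eq_UN)
  then have "ind y \<noteq> ind (xs ! n)"
    using new_offer_not_served[OF assms(1)] by (metis image_eqI)
  ultimately show "y \<in> H k (Suc n)"
    using served_Suc_subset[OF assms(1,4)] prefix_Suc[OF assms(1)] by (auto simp: avail_def)
qed

lemma offer_step:
  assumes "n < length xs"
    and chosen_eq: "\<And>j. 1 \<le> j \<Longrightarrow> j \<le> K \<Longrightarrow> chosen j n = C j (F j n) (Q j n)"
    and "1 \<le> k" "k \<le> K"
  shows "chosen k n \<subseteq> H k (Suc n)
       \<and> C k (F k (Suc n)) (Q k (Suc n)) \<subseteq> chosen k n \<union> (H k (Suc n) - H k n)
       \<and> chosen k (Suc n) = C k (F k (Suc n)) (Q k (Suc n))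
       \<and> Q k (Suc n) \<le> Q k n
       \<and> rejected C k (F k n) (Q k n) \<subseteq> rejected C k (F k (Suc n)) (Q k (Suc n))"
  using assms(3,4)
proof (induction k rule: less_induct)
  case (less k)
  note rule = category_rule_C[OF less.prems]
  have IH: "chosen j (Suc n) = C j (F j (Suc n)) (Q j (Suc n))"
    "C j (F j (Suc n)) (Q j (Suc n)) \<subseteq> chosen j n \<union> (H j (Suc n) - H j n)"
    "Q j (Suc n) \<le> Q j n"
    if "1 \<le> j" "j < k" for j
    using less.IH[OF \<open>j < k\<close> \<open>1 \<le> j\<close>] that less.prems by simp_all
  have cap_le: "Q k (Suc n) \<le> Q k n"
    using cap_Suc_le[OF less.prems] chosen_eq IH less.prems by simp
  have rejected: "rejected C k (F k n) (Q k n) \<subseteq> rejected C k (F k (Suc n)) (Q k (Suc n))"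
    using category_rule_rejected_antimono[where C = C and k = k, OF rule finite_Xs F_mono_Suc
        F_subset_Xs cap_le] .
  have choice_F: "C k (F k (Suc n)) (Q k (Suc n)) \<subseteq> chosen k n \<union> (H k (Suc n) - H k n)"
    using choice_F_Suc_subset[OF less.prems chosen_eq cap_le] less.prems by simp
  have kept: "chosen k n \<subseteq> H k (Suc n)"
    using chosen_subset_H_Suc[OF \<open>n < length xs\<close> less.prems] IH by simp
  have "chosen k (Suc n) = C k (F k (Suc n)) (Q k (Suc n))"
    using category_rule_irrelevance_of_rejected[OF rule finite_Xs H_subset_F F_subset_Xs]
      choice_F kept by blast
  with kept choice_F cap_le rejected show ?case by blast
qed

lemma chosen_eq_choice_F:
  "n \<le> length xs \<Longrightarrow> 1 \<le> k \<Longrightarrow> k \<le> K \<Longrightarrow> chosen k n = C k (F k n) (Q k n)"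
proof (induction n arbitrary: k)
  case 0
  then show ?case by (simp add: F_0)
next
  case (Suc n)
  then show ?case using offer_step[of n k] by simp
qed

end

theorem proposition3:
  fixes X :: "'x set" and ind :: "'x \<Rightarrow> 'i" and inst :: "'x \<Rightarrow> 's" and s :: 's
    and K :: nat and C :: "nat \<Rightarrow> 'x set \<Rightarrow> nat \<Rightarrow> 'x set"
    and qf :: "nat \<Rightarrow> (nat \<Rightarrow> int) \<Rightarrow> nat" and xs :: "'x list"
  assumes rule: "gen_seq_rule X ind inst s K C qf"
    and obs: "observable X ind inst s K C qf xs"
    and m: "1 \<le> m" "m \<le> length xs"
    and k: "1 \<le> k" "k \<le> K"
  defines "H \<equiv> \<lambda>n. avail C qf ind (set (take n xs)) k"
    and "q \<equiv> \<lambda>n. cap C qf ind (set (take n xs)) k"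
    and "F \<equiv> \<lambda>n. F_avail C qf ind xs k n"
  shows "C k (H (m - 1)) (q (m - 1)) \<subseteq> H m
       \<and> C k (F m) (q m) \<subseteq> C k (H (m - 1)) (q (m - 1)) \<union> (H m - H (m - 1))
       \<and> C k (H m) (q m) = C k (F m) (q m)
       \<and> q (m - 1) \<ge> q m
       \<and> rejected C k (F (m - 1)) (q (m - 1)) \<subseteq> rejected C k (F m) (q m)"
proof -
  interpret offer_process X ind inst s K C qf xs
    using rule obs by unfold_locales
  obtain n where m_eq: "m = Suc n"
    using m(1) by (cases m) auto
  with m have "n < length xs" by simp
  then show ?thesis
    unfolding H_def q_def F_def m_eq
    using offer_step chosen_eq_choice_F k by simp
qed

end
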